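(* Let $X$ be a path connected topological quandle. Then $H_0(X)$ and $H^R_1(X)$ are isomorphic.
   Context: A quandle is a set with a binary operation $\triangleright$ such that $x\triangleright x=x$, each $\beta_y(x)=x\triangleright y$ is bijective, and $(x\triangleright y)\triangleright z=(x\triangleright z)\triangleright(y\triangleright z)$. A topological quandle is a topological space with a continuous quandle operation such that every $\beta_y$ is a homeomorphism. $C_0(X)$ is the free abelian group on points of $X$ (constant 0-simplices $\sigma_x$), $C_1(X)$ the free abelian group on paths $\sigma:[0,1]\to X$; for a path $\sigma_{[a,b]}$ from $a$ to $b$, $\partial_1\sigma_{[a,b]}=\sigma_a-\sigma_{a\triangleright b}$; $H_0(X)=C_0(X)/\partial_1(C_1(X))$. The rack chain complex $C^R_n(X)$ is the free abelian group on $n$-tuples $(x_1,\dots,x_n)\in X^n$ with boundary $\partial^R_n(x_1,\dots,x_n)=\sum_{i=2}^n(-1)^i\big[(x_1,\dots,\hat{x_i},\dots,x_n)-(x_1\triangleright x_i,\dots,x_{i-1}\triangleright x_i,x_{i+1},\dots,x_n)\big]$; $H^R_n(X)$ is its $n$-th homology. In particular $H^R_1(X)=C^R_1(X)/\partial^R_2(C^R_2(X))$ with $\partial^R_2(x_1,x_2)=(x_1)-(x_1\triangleright x_2)$. *)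

theory Defs
  imports "HOL-Analysis.Analysis" "HOL-Algebra.Free_Abelian_Groups"
begin

text \<open>A quandle structure on a carrier set Q with operation op (op x y = x \<triangleright> y).\<close>
definition quandle_on :: "'a set \<Rightarrow> ('a \<Rightarrow> 'a \<Rightarrow> 'a) \<Rightarrow> bool" where
  "quandle_on Q op \<longleftrightarrow>
     (\<forall>x\<in>Q. \<forall>y\<in>Q. op x y \<in> Q) \<and>
     (\<forall>x\<in>Q. op x x = x) \<and>
     (\<forall>y\<in>Q. bij_betw (\<lambda>x. op x y) Q Q) \<and>
     (\<forall>x\<in>Q. \<forall>y\<in>Q. \<forall>z\<in>Q. op (op x y) z = op (op x z) (op y z))"

definition topological_quandle :: "'a topology \<Rightarrow> ('a \<Rightarrow> 'a \<Rightarrow> 'a) \<Rightarrow> bool" where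
  "topological_quandle X op \<longleftrightarrow>
     quandle_on (topspace X) op \<and>
     continuous_map (prod_topology X X) X (\<lambda>(x, y). op x y) \<and>
     (\<forall>y\<in>topspace X. homeomorphic_map X X (\<lambda>x. op x y))"

definition C0 :: "'a topology \<Rightarrow> ('a \<Rightarrow>\<^sub>0 int) monoid" where
  "C0 X = free_Abelian_group (topspace X)"

definition C1 :: "'a topology \<Rightarrow> ((real \<Rightarrow> 'a) \<Rightarrow>\<^sub>0 int) monoid" where
  "C1 X = free_Abelian_group {\<sigma>. pathin X \<sigma>}"

definition boundary1 :: "('a \<Rightarrow> 'a \<Rightarrow> 'a) \<Rightarrow> ((real \<Rightarrow> 'a) \<Rightarrow>\<^sub>0 int) \<Rightarrow> ('a \<Rightarrow>\<^sub>0 int)" where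
  "boundary1 op = frag_extend (\<lambda>\<sigma>. frag_of (\<sigma> 0) - frag_of (op (\<sigma> 0) (\<sigma> 1)))"

definition H0 :: "'a topology \<Rightarrow> ('a \<Rightarrow> 'a \<Rightarrow> 'a) \<Rightarrow> ('a \<Rightarrow>\<^sub>0 int) set monoid" where
  "H0 X op = C0 X Mod (boundary1 op ` carrier (C1 X))"

definition CR1 :: "'a set \<Rightarrow> ('a \<Rightarrow>\<^sub>0 int) monoid" where
  "CR1 Q = free_Abelian_group Q"

definition CR2 :: "'a set \<Rightarrow> (('a \<times> 'a) \<Rightarrow>\<^sub>0 int) monoid" where
  "CR2 Q = free_Abelian_group (Q \<times> Q)"

definition rack_boundary2 :: "('a \<Rightarrow> 'a \<Rightarrow> 'a) \<Rightarrow> (('a \<times> 'a) \<Rightarrow>\<^sub>0 int) \<Rightarrow> ('a \<Rightarrow>\<^sub>0 int)" where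
  "rack_boundary2 op = frag_extend (\<lambda>(x1, x2). frag_of x1 - frag_of (op x1 x2))"

definition HR1 :: "'a set \<Rightarrow> ('a \<Rightarrow> 'a \<Rightarrow> 'a) \<Rightarrow> ('a \<Rightarrow>\<^sub>0 int) set monoid" where
  "HR1 Q op = CR1 Q Mod (rack_boundary2 op ` carrier (CR2 Q))"

end

theory Submission
  imports Defs
begin

text \<open>Both boundary maps send a generator to \<open>\<sigma>\<^sub>a - \<sigma>\<^sub>a\<^sub>\<triangleright>\<^sub>b\<close>, which depends only on the
  pair \<open>(a, b)\<close>: the endpoints of the path, respectively the 2-tuple itself. In a path connected
  space every pair of points is the pair of endpoints of some path, so the two boundary subgroups
  of the free abelian group on \<open>X\<close> coincide and \<open>H\<^sub>0(X)\<close> and \<open>H\<^sup>R\<^sub>1(X)\<close> are the same quotient.\<close>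

lemma frag_extend_image_subset:
  assumes "\<And>s. s \<in> S \<Longrightarrow> f s \<in> g ` T"
  shows "frag_extend f ` carrier (free_Abelian_group S) \<subseteq> frag_extend g ` carrier (free_Abelian_group T)"
proof clarify
  fix c assume "c \<in> carrier (free_Abelian_group S)"
  then have "Poly_Mapping.keys c \<subseteq> S" by simp
  then have "\<exists>d. Poly_Mapping.keys d \<subseteq> T \<and> frag_extend g d = frag_extend f c"
  proof (induction c rule: frag_induction)
    case zero
    show ?case by (intro exI[of _ 0]) simp
  next
    case (one s)
    then obtain t where "t \<in> T" "f s = g t" using assms by blast
    then show ?case by (intro exI[of _ "frag_of t"]) simp
  next
    case (diff a b)
    then obtain da db where "Poly_Mapping.keys da \<subseteq> T" "frag_extend g da = frag_extend f a"
      "Poly_Mapping.keys db \<subseteq> T" "frag_extend g db = frag_extend f b" by blast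
    then show ?case
      using keys_diff[of da db] by (intro exI[of _ "da - db"]) (auto simp: frag_extend_diff)
  qed
  then show "frag_extend f c \<in> frag_extend g ` carrier (free_Abelian_group T)"
    by (metis carrier_free_Abelian_group_iff image_eqI)
qed

lemma frag_extend_image_eq:
  assumes "f ` S = g ` T"
  shows "frag_extend f ` carrier (free_Abelian_group S) = frag_extend g ` carrier (free_Abelian_group T)"
  using assms by (intro equalityI frag_extend_image_subset) blast+

lemma path_connected_space_iff_endpoints:
  "path_connected_space X \<longleftrightarrow> (\<lambda>g. (g 0, g 1)) ` {g. pathin X g} = topspace X \<times> topspace X"
proof -
  have "(\<lambda>g. (g 0, g 1)) ` {g. pathin X g} \<subseteq> topspace X \<times> topspace X"
    by (auto simp: pathin_def continuous_map_def)
  moreover have "path_connected_space X \<longleftrightarrow>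
      topspace X \<times> topspace X \<subseteq> (\<lambda>g. (g 0, g 1)) ` {g. pathin X g}"
    unfolding path_connected_space_def subset_iff image_iff mem_Collect_eq mem_Times_iff
    by force
  ultimately show ?thesis by (simp add: set_eq_subset)
qed

theorem mainTheorem9:
  fixes X :: "'a topology" and op :: "'a \<Rightarrow> 'a \<Rightarrow> 'a"
  assumes "topological_quandle X op"
    and "path_connected_space X"
  shows "H0 X op \<cong> HR1 (topspace X) op"
proof -
  let ?bd = "\<lambda>(x, y). frag_of x - frag_of (op x y)"
  have endpoints: "(\<lambda>\<sigma>. (\<sigma> 0, \<sigma> 1)) ` {\<sigma>. pathin X \<sigma>} = topspace X \<times> topspace X"
    using assms(2) by (simp add: path_connected_space_iff_endpoints)
  have "(\<lambda>\<sigma>. frag_of (\<sigma> 0) - frag_of (op (\<sigma> 0) (\<sigma> 1))) ` {\<sigma>. pathin X \<sigma>}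
          = ?bd ` (topspace X \<times> topspace X)"
    unfolding endpoints [symmetric] by (simp add: image_image)
  then have "boundary1 op ` carrier (C1 X) = rack_boundary2 op ` carrier (CR2 (topspace X))"
    unfolding boundary1_def rack_boundary2_def C1_def CR2_def by (rule frag_extend_image_eq)
  then show ?thesis
    by (simp add: H0_def HR1_def C0_def CR1_def)
qed

end
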